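(* Assume $CA_2$. Then $\omega_1\not\rightarrow(\omega_1,\omega+2)^2_2$; that is, there is $c:[\omega_1]^2\to2$ such that there is no uncountable $0$-monochromatic subset of $\omega_1$ and no $1$-monochromatic subset of $\omega_1$ of order type $\omega+2$.
   Context: A set $Y\subseteq\omega_1$ is $i$-monochromatic for $c$ if $c(\{\alpha,\beta\})=i$ for all distinct $\alpha,\beta\in Y$. A type is a sequence $\tau=\{(m_k,n_{k+1},r_{k+1})\}_{k\in\omega}$ of natural numbers with $m_0=1$; $n_k\ge2$ for $k\ge1$; every $r\in\omega$ equals $r_k$ for infinitely many $k$; $m_k>r_{k+1}$; and $m_{k+1}=r_{k+1}+(m_k-r_{k+1})n_{k+1}$ for all $k$. For a set of ordinals $X$ and $\mathcal F\subseteq[X]^{<\omega}$, $\mathcal F_k$ is the set of elements of rank $k$ in $(\mathcal F,\subsetneq)$; $A\sqsubseteq B$ means $A\subseteq B$ and every element of $B$ below an element of $A$ is in $A$; $A<B$ means every element of $A$ is below every element of $B$. $\mathcal F$ is a construction scheme over $X$ of type $\tau$ if (1) every finite subset of $X$ lies in a member of $\mathcal F$; (2) $|F|=m_k$ for $F\in\mathcal F_k$; (3) $E\cap F\sqsubseteq E,F$ for $E,F\in\mathcal F_k$; (4) each $F\in\mathcal F_{k+1}$ is the union of uniquely determined $F_0,\dots,F_{n_{k+1}-1}\in\mathcal F_k$ forming a $\Delta$-system with root $R(F)$, $|R(F)|=r_{k+1}$, $R(F)<F_0\setminus R(F)<\dots<F_{n_{k+1}-1}\setminus R(F)$. For a construction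 scheme $\mathcal F$ over $\omega_1$, $l\ge1$, $F\in\mathcal F_l$ and finite $\mathcal C\subseteq[\omega_1]^{<\omega}$: $F$ captures $\mathcal C$ if $|\mathcal C|\le n_l$ and $\mathcal C$ can be enumerated as $\{c_i\}_{i<|\mathcal C|}$ with $c_i\subseteq F_i$, $c_i\setminus R(F)\neq\emptyset$ and $\phi_i[c_0]=c_i$ where $\phi_i:F_0\to F_i$ is the increasing bijection. $\mathcal F$ is $n$-capturing if for every uncountable $S\subseteq[\omega_1]^{<\omega}$ and every $k\in\omega$ there are $\mathcal C\in[S]^n$, $l>k$ and $F\in\mathcal F_l$ capturing $\mathcal C$. $CA_n$ is the statement: for every type $\tau$ with $n\le n_k$ for all $k\ge1$ there is an $n$-capturing construction scheme over $\omega_1$ of type $\tau$. *)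

theory Defs
  imports Main "HOL-Library.Countable_Set"
begin

text \<open>A well-ordered type is (isomorphic to) omega_1 iff it is uncountable and every
  proper initial segment is countable.\<close>
definition omega1_type :: "'a::wellorder itself \<Rightarrow> bool" where
  "omega1_type _ \<longleftrightarrow> \<not> countable (UNIV :: 'a set) \<and> (\<forall>x::'a. countable {y. y < x})"

definition set_less :: "'a::linorder set \<Rightarrow> 'a set \<Rightarrow> bool" where
  "set_less A B \<longleftrightarrow> (\<forall>a\<in>A. \<forall>b\<in>B. a < b)"

definition init_seg :: "'a::linorder set \<Rightarrow> 'a set \<Rightarrow> bool" where
  "init_seg A B \<longleftrightarrow> A \<subseteq> B \<and> (\<forall>b\<in>B. \<forall>a\<in>A. b < a \<longrightarrow> b \<in> A)"

lemma image_cong_fundef[fundef_cong]: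
  "M = N \<Longrightarrow> (\<And>x. x \<in> N \<Longrightarrow> f x = g x) \<Longrightarrow> f ` M = g ` N"
  by (rule image_cong)

function frank :: "'a set set \<Rightarrow> 'a set \<Rightarrow> nat" where
  "frank F A = (if finite A
     then Max (insert 0 ((\<lambda>B. Suc (frank F B)) ` {B \<in> F. B \<subset> A})) else 0)"
  by pat_completeness auto
termination
  by (relation "measure (\<lambda>(F, A). card A)") (auto intro: psubset_card_mono)

definition level :: "'a set set \<Rightarrow> nat \<Rightarrow> 'a set set" where
  "level F k = {A \<in> F. frank F A = k}"

text \<open>A type tau = ((m k, n (k+1), r (k+1)))_k ; the values n 0 and r 0 are irrelevant.\<close>
definition is_type :: "(nat \<Rightarrow> nat) \<Rightarrow> (nat \<Rightarrow> nat) \<Rightarrow> (nat \<Rightarrow> nat) \<Rightarrow> bool" where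
  "is_type m n r \<longleftrightarrow>
     m 0 = 1 \<and>
     (\<forall>k\<ge>1. n k \<ge> 2) \<and>
     (\<forall>x. infinite {k. k \<ge> 1 \<and> r k = x}) \<and>
     (\<forall>k. m k > r (Suc k)) \<and>
     (\<forall>k. m (Suc k) = r (Suc k) + (m k - r (Suc k)) * n (Suc k))"

definition decomp :: "'a::linorder set set \<Rightarrow> nat \<Rightarrow> nat \<Rightarrow> 'a set
     \<Rightarrow> (nat \<Rightarrow> 'a set) \<Rightarrow> 'a set \<Rightarrow> bool" where
  "decomp G N rr A Fs R \<longleftrightarrow>
     (\<forall>i<N. Fs i \<in> G) \<and>
     A = (\<Union>i<N. Fs i) \<and>
     (\<forall>i<N. \<forall>j<N. i \<noteq> j \<longrightarrow> Fs i \<inter> Fs j = R) \<and>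
     card R = rr \<and>
     set_less R (Fs 0 - R) \<and>
     (\<forall>i. Suc i < N \<longrightarrow> set_less (Fs i - R) (Fs (Suc i) - R))"

definition construction_scheme :: "'a::linorder set \<Rightarrow> 'a set set
     \<Rightarrow> (nat \<Rightarrow> nat) \<Rightarrow> (nat \<Rightarrow> nat) \<Rightarrow> (nat \<Rightarrow> nat) \<Rightarrow> bool" where
  "construction_scheme X F m n r \<longleftrightarrow>
     (\<forall>A\<in>F. finite A \<and> A \<subseteq> X) \<and>
     (\<forall>A. finite A \<and> A \<subseteq> X \<longrightarrow> (\<exists>B\<in>F. A \<subseteq> B)) \<and>
     (\<forall>k. \<forall>A\<in>level F k. card A = m k) \<and>
     (\<forall>k. \<forall>E\<in>level F k. \<forall>A\<in>level F k. init_seg (E \<inter> A) E \<and> init_seg (E \<inter> A) A) \<and>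
     (\<forall>k. \<forall>A\<in>level F (Suc k).
        \<exists>Fs. (\<exists>R. decomp (level F k) (n (Suc k)) (r (Suc k)) A Fs R) \<and>
          (\<forall>Gs. (\<exists>R. decomp (level F k) (n (Suc k)) (r (Suc k)) A Gs R)
                 \<longrightarrow> (\<forall>i<n (Suc k). Gs i = Fs i)))"

definition captures :: "'a::linorder set set \<Rightarrow> (nat \<Rightarrow> nat) \<Rightarrow> (nat \<Rightarrow> nat) \<Rightarrow> nat
     \<Rightarrow> 'a set \<Rightarrow> 'a set set \<Rightarrow> bool" where
  "captures F n r l A C \<longleftrightarrow>
     l \<ge> 1 \<and> A \<in> level F l \<and> finite C \<and> card C \<le> n l \<and>
     (\<exists>Fs R. decomp (level F (l - 1)) (n l) (r l) A Fs R \<and>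
       (\<exists>cs. bij_betw cs {..<card C} C \<and>
          (\<forall>i<card C. cs i \<subseteq> Fs i \<and> cs i - R \<noteq> {} \<and>
             (\<forall>\<phi>. strict_mono_on (Fs 0) \<phi> \<and> bij_betw \<phi> (Fs 0) (Fs i)
                  \<longrightarrow> \<phi> ` cs 0 = cs i))))"

definition n_capturing :: "nat \<Rightarrow> 'a::linorder set set \<Rightarrow> (nat \<Rightarrow> nat) \<Rightarrow> (nat \<Rightarrow> nat) \<Rightarrow> bool" where
  "n_capturing N F n r \<longleftrightarrow>
     (\<forall>S. (\<forall>s\<in>S. finite s) \<and> \<not> countable S \<longrightarrow>
        (\<forall>k. \<exists>C l A. C \<subseteq> S \<and> finite C \<and> card C = N \<and> l > k \<and> A \<in> level F l \<and>
                 captures F n r l A C))"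

definition CA :: "'a::linorder itself \<Rightarrow> nat \<Rightarrow> bool" where
  "CA _ N \<longleftrightarrow> (\<forall>m n r. is_type m n r \<and> (\<forall>k\<ge>1. N \<le> n k) \<longrightarrow>
       (\<exists>F :: 'a set set. construction_scheme UNIV F m n r \<and> n_capturing N F n r))"

definition monochromatic :: "('a set \<Rightarrow> nat) \<Rightarrow> nat \<Rightarrow> 'a set \<Rightarrow> bool" where
  "monochromatic c i Y \<longleftrightarrow> (\<forall>\<alpha>\<in>Y. \<forall>\<beta>\<in>Y. \<alpha> \<noteq> \<beta> \<longrightarrow> c {\<alpha>, \<beta>} = i)"

text \<open>Y has order type omega+2: it is the image of an order isomorphism from
  omega+2 = {0,1,2,...} \<union> {omega, omega+1}, i.e. Y = range f \<union> {a, b} with f strictly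
  increasing and f k < a < b for all k.\<close>
definition otype_omega_plus_two :: "'a::linorder set \<Rightarrow> bool" where
  "otype_omega_plus_two Y \<longleftrightarrow>
     (\<exists>(f :: nat \<Rightarrow> 'a) a b. strict_mono f \<and> (\<forall>k. f k < a) \<and> a < b \<and> Y = range f \<union> {a, b})"

end

theory Submission
  imports Defs
begin

(* Colour a pair {\<alpha> < \<beta>} by 1 iff \<alpha> and \<beta> are twins: for some j they occupy the same
   position in two members P0, P1 of F_j lying inside one member of F_(j+1), with \<alpha> in P0 - P1
   and \<beta> in P1 - P0. Capturing a pair of singletons produces twins, so with CA_2 every
   uncountable set contains two twins. Now let a < b be the top points of a 1-homogeneous set of
   type \<omega>+2, twins via A0 in F_(j0+1), and pick y in its \<omega>-part outside A0, a twin of a at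
   level j1 and of b at level j2. The scheme is coherent: a member of F_k and a member of F_j with
   k <= j that share a point agree below it. Hence j0 < j1, j2; if j1 <> j2, coherence puts y into
   the piece that should avoid it, and if j1 = j2, then a and b get the same position in one
   member of F_j1. *)

(* The defining equation of frank loops as a rewrite rule. *)
declare frank.simps [simp del]

lemma strict_mono_on_inv_into:
  fixes h :: "'a::linorder \<Rightarrow> 'b::linorder"
  assumes mono: "strict_mono_on I h" and bij: "bij_betw h I A"
  shows "strict_mono_on A (inv_into I h)"
proof (rule strict_mono_onI)
  fix x y assume "x \<in> A" "y \<in> A" "x < y"
  then show "inv_into I h x < inv_into I h y"
    using strict_mono_on_less[OF mono, of "inv_into I h x" "inv_into I h y"] bij
    by (simp add: bij_betw_def inv_into_into f_inv_into_f)
qed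

lemma strict_mono_on_nth_sorted_list_of_set:
  "strict_mono_on {..<card A} ((!) (sorted_list_of_set A))"
  by (rule strict_mono_onI) (simp add: sorted_wrt_nth_less)

lemma bij_betw_nth_sorted_list_of_set:
  "finite A \<Longrightarrow> bij_betw ((!) (sorted_list_of_set A)) {..<card A} A"
  by (rule bij_betw_nth) simp_all

lemma finite_order_iso:
  fixes A B :: "'a::linorder set"
  assumes "finite A" "finite B" "card A = card B"
  obtains \<phi> where "strict_mono_on A \<phi>" "bij_betw \<phi> A B"
proof
  let ?enum = "\<lambda>S. (!) (sorted_list_of_set S)"
  have inv: "bij_betw (inv_into {..<card A} (?enum A)) A {..<card A}"
    using bij_betw_inv_into bij_betw_nth_sorted_list_of_set[OF assms(1)] by blast
  show "bij_betw (?enum B \<circ> inv_into {..<card A} (?enum A)) A B"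
    using bij_betw_trans[OF inv] bij_betw_nth_sorted_list_of_set[OF assms(2)] assms(3) by simp
  have "strict_mono_on {..<card A} (?enum B)"
    using strict_mono_on_nth_sorted_list_of_set[of B] assms(3) by simp
  then show "strict_mono_on A (?enum B \<circ> inv_into {..<card A} (?enum A))"
    using monotone_on_o strict_mono_on_inv_into[OF strict_mono_on_nth_sorted_list_of_set
        bij_betw_nth_sorted_list_of_set[OF assms(1)]] inv
    by (metis bij_betw_imp_surj_on order.refl)
qed

lemma card_less_strict_mono_bij:
  fixes \<phi> :: "'a::linorder \<Rightarrow> 'b::linorder"
  assumes mono: "strict_mono_on A \<phi>" and bij: "bij_betw \<phi> A B" and "x \<in> A"
  shows "card {w\<in>B. w < \<phi> x} = card {z\<in>A. z < x}"
proof -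
  have "{w\<in>B. w < \<phi> x} = \<phi> ` {z\<in>A. z < x}"
    using bij \<open>x \<in> A\<close> strict_mono_on_less[OF mono] by (auto simp: bij_betw_def)
  moreover have "inj_on \<phi> {z\<in>A. z < x}"
    using bij by (auto simp: bij_betw_def intro: inj_on_subset)
  ultimately show ?thesis by (simp add: card_image)
qed

(* The first coordinate of the k-th pair: every value recurs infinitely often. *)
definition binary_r :: "nat \<Rightarrow> nat" where
  "binary_r k = fst (prod_decode (k - 1))"

primrec binary_m :: "nat \<Rightarrow> nat" where
  "binary_m 0 = 1"
| "binary_m (Suc k) = binary_r (Suc k) + (binary_m k - binary_r (Suc k)) * 2"

lemma binary_r_Suc_le: "binary_r (Suc k) \<le> k"
  using le_prod_encode_1[of "fst (prod_decode k)" "snd (prod_decode k)"]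
  by (simp add: binary_r_def)

lemma less_binary_m: "k < binary_m k"
proof (induction k)
  case (Suc k)
  then show ?case using binary_r_Suc_le[of k] by simp
qed simp

lemma is_type_binary: "is_type binary_m (\<lambda>_. 2) binary_r"
  unfolding is_type_def
proof (intro conjI allI impI)
  fix x :: nat
  show "infinite {k. k \<ge> 1 \<and> binary_r k = x}"
    unfolding infinite_nat_iff_unbounded_le
  proof
    fix N
    have "N \<le> Suc (prod_encode (x, N))"
      using le_prod_encode_2[of N x] by linarith
    moreover have "binary_r (Suc (prod_encode (x, N))) = x"
      by (simp add: binary_r_def)
    ultimately show "\<exists>k\<ge>N. k \<in> {k. k \<ge> 1 \<and> binary_r k = x}" by fastforce
  qed
next
  fix k show "binary_r (Suc k) < binary_m k"
    using binary_r_Suc_le[of k] less_binary_m[of k] by simp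
qed simp_all

locale scheme =
  fixes X :: "'a::linorder set" and F :: "'a set set" and m n r :: "nat \<Rightarrow> nat"
  assumes construction_scheme: "construction_scheme X F m n r"
begin

lemma level_finite: "A \<in> level F k \<Longrightarrow> finite A"
  using construction_scheme unfolding construction_scheme_def level_def by simp

lemma level_card: "A \<in> level F k \<Longrightarrow> card A = m k"
  using construction_scheme unfolding construction_scheme_def by simp

lemma level_decomp:
  assumes "A \<in> level F (Suc k)"
  obtains Fs R where "decomp (level F k) (n (Suc k)) (r (Suc k)) A Fs R"
  using construction_scheme assms unfolding construction_scheme_def by (elim conjE) metis

lemma level_coherent:
  assumes "E \<in> level F k" "A \<in> level F k" "x \<in> E" "x \<in> A" "y \<in> E" "y < x"
  shows "y \<in> A"
proof -
  have "init_seg (E \<inter> A) E"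
    using construction_scheme assms(1,2) unfolding construction_scheme_def by simp
  then show ?thesis using assms(3-6) unfolding init_seg_def by blast
qed

lemma level_less_eq:
  assumes "E \<in> level F k" "A \<in> level F k" "x \<in> E" "x \<in> A"
  shows "{z\<in>E. z < x} = {z\<in>A. z < x}"
  using level_coherent[OF assms] level_coherent[OF assms(2,1,4,3)] by blast

lemma level_descend:
  "B \<in> level F K \<Longrightarrow> x \<in> B \<Longrightarrow> k \<le> K \<Longrightarrow> \<exists>Q\<in>level F k. x \<in> Q \<and> Q \<subseteq> B"
proof (induction K arbitrary: B)
  case (Suc K)
  show ?case
  proof (cases "k = Suc K")
    case False
    obtain Fs R where "decomp (level F K) (n (Suc K)) (r (Suc K)) B Fs R"
      using level_decomp[OF Suc.prems(1)] .
    then obtain i where i: "Fs i \<in> level F K" "x \<in> Fs i" "Fs i \<subseteq> B"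
      using Suc.prems(2) unfolding decomp_def by blast
    have "k \<le> K" using Suc.prems(3) False by simp
    then obtain Q where "Q \<in> level F k" "x \<in> Q" "Q \<subseteq> Fs i"
      using Suc.IH[OF i(1,2)] by blast
    then show ?thesis using i(3) by blast
  qed (use Suc.prems in auto)
qed auto

lemma level_coherent_le:
  assumes E: "E \<in> level F k" and P: "P \<in> level F j" and "k \<le> j"
    and "x \<in> E" "x \<in> P" "y \<in> E" "y < x"
  shows "y \<in> P"
proof -
  obtain Q where "Q \<in> level F k" "x \<in> Q" "Q \<subseteq> P"
    using level_descend[OF P \<open>x \<in> P\<close> \<open>k \<le> j\<close>] by blast
  then show ?thesis using level_coherent[OF E] assms(4,6,7) by blast
qed

definition twin_at :: "nat \<Rightarrow> 'a \<Rightarrow> 'a \<Rightarrow> bool" where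
  "twin_at j \<alpha> \<beta> \<longleftrightarrow> \<alpha> < \<beta> \<and> (\<exists>P0 P1 A. P0 \<in> level F j \<and> P1 \<in> level F j \<and>
      A \<in> level F (Suc j) \<and> P0 \<union> P1 \<subseteq> A \<and> \<alpha> \<in> P0 - P1 \<and> \<beta> \<in> P1 - P0 \<and>
      card {z\<in>P0. z < \<alpha>} = card {z\<in>P1. z < \<beta>})"

lemma twin_atE:
  assumes "twin_at j \<alpha> \<beta>"
  obtains P0 P1 A where "P0 \<in> level F j" "P1 \<in> level F j" "A \<in> level F (Suc j)"
    "\<alpha> \<in> P0" "\<alpha> \<in> A" "\<alpha> \<notin> P1" "\<beta> \<in> P1" "\<beta> \<in> A" "\<alpha> < \<beta>"
    "card {z\<in>P0. z < \<alpha>} = card {z\<in>P1. z < \<beta>}"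
  using assms unfolding twin_at_def by blast

lemma twin_at_level_gt:
  assumes "twin_at j y a" "A0 \<in> level F (Suc j0)" "a \<in> A0" "y \<notin> A0"
  shows "j0 < j"
proof (rule ccontr)
  assume "\<not> j0 < j"
  obtain A where "A \<in> level F (Suc j)" "y \<in> A" "a \<in> A" "y < a"
    using twin_atE[OF assms(1)] by blast
  moreover have "Suc j \<le> Suc j0" using \<open>\<not> j0 < j\<close> by simp
  ultimately have "y \<in> A0" using level_coherent_le[OF _ assms(2)] assms(3) by blast
  then show False using assms(4) by contradiction
qed

lemma outside_point_not_twin_of_two:
  assumes A0: "A0 \<in> level F (Suc j0)" and "a \<in> A0" "b \<in> A0" "a < b" "y \<notin> A0"
    and ya: "twin_at j1 y a" and yb: "twin_at j2 y b"
  shows False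
proof -
  obtain G0 G1 G where G: "G0 \<in> level F j1" "G1 \<in> level F j1" "G \<in> level F (Suc j1)"
    "y \<in> G0" "y \<in> G" "y \<notin> G1" "a \<in> G1" "a \<in> G" "y < a"
    "card {z\<in>G0. z < y} = card {z\<in>G1. z < a}"
    using ya by (rule twin_atE)
  obtain H0 H1 H where H: "H0 \<in> level F j2" "H1 \<in> level F j2" "H \<in> level F (Suc j2)"
    "y \<in> H0" "y \<in> H" "y \<notin> H1" "b \<in> H1" "b \<in> H" "y < b"
    "card {z\<in>H0. z < y} = card {z\<in>H1. z < b}"
    using yb by (rule twin_atE)
  have "j0 < j1" "j0 < j2"
    using twin_at_level_gt[OF ya A0] twin_at_level_gt[OF yb A0] assms(2,3,5) by auto
  have a_H1: "a \<in> H1"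
    using level_coherent_le[OF A0 H(2) _ assms(3) H(7) assms(2,4)] \<open>j0 < j2\<close> by simp
  consider "j1 < j2" | "j2 < j1" | "j1 = j2" by linarith
  then show False
  proof cases
    case 1
    then have "y \<in> H1" using level_coherent_le[OF G(3) H(2) _ G(8) a_H1 G(5,9)] by simp
    then show False using H(6) by contradiction
  next
    case 2
    have "a \<in> H"
      using level_coherent_le[OF A0 H(3) _ assms(3) H(8) assms(2,4)] \<open>j0 < j2\<close> by simp
    then have "y \<in> G1" using level_coherent_le[OF H(3) G(2) _ _ G(7) H(5) G(9)] 2 by simp
    then show False using G(6) by contradiction
  next
    case 3
    then have "{z\<in>G0. z < y} = {z\<in>H0. z < y}" "{z\<in>G1. z < a} = {z\<in>H1. z < a}"
      using level_less_eq[OF G(1) _ G(4) H(4)] level_less_eq[OF G(2) _ G(7) a_H1] H(1,2)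
      by simp_all
    then have "card {z\<in>H1. z < a} = card {z\<in>H1. z < b}"
      using G(10) H(10) by simp
    moreover have "{z\<in>H1. z < a} \<subset> {z\<in>H1. z < b}"
      using a_H1 \<open>a < b\<close> by auto
    moreover have "finite {z\<in>H1. z < b}"
      using level_finite[OF H(2)] by simp
    ultimately show False
      using psubset_card_mono[of "{z\<in>H1. z < b}" "{z\<in>H1. z < a}"] by simp
  qed
qed

lemma captured_singletons_twin:
  assumes capt: "captures F n r l A C" and "card C = 2" and singletons: "\<forall>c\<in>C. \<exists>y. c = {y}"
  obtains \<alpha> \<beta> where "{\<alpha>} \<in> C" "{\<beta>} \<in> C" "twin_at (l - 1) \<alpha> \<beta>"
proof -
  have l: "1 \<le> l" "A \<in> level F l" and "2 \<le> n l"
    and "\<exists>Fs R. decomp (level F (l - 1)) (n l) (r l) A Fs R \<and> (\<exists>cs. bij_betw cs {..<2} C \<and>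
          (\<forall>i<2. cs i \<subseteq> Fs i \<and> cs i - R \<noteq> {} \<and>
             (\<forall>\<phi>. strict_mono_on (Fs 0) \<phi> \<and> bij_betw \<phi> (Fs 0) (Fs i) \<longrightarrow> \<phi> ` cs 0 = cs i)))"
    using capt \<open>card C = 2\<close> unfolding captures_def by simp_all
  then obtain Fs R cs where d: "decomp (level F (l - 1)) (n l) (r l) A Fs R"
    and cs: "bij_betw cs {..<2} C"
    and cs_i: "\<forall>i<2. cs i \<subseteq> Fs i \<and> cs i - R \<noteq> {} \<and>
      (\<forall>\<phi>. strict_mono_on (Fs 0) \<phi> \<and> bij_betw \<phi> (Fs 0) (Fs i) \<longrightarrow> \<phi> ` cs 0 = cs i)"
    by blast
  have cs_sub: "cs 0 - R \<noteq> {}" "cs 1 - R \<noteq> {}" "cs 0 \<subseteq> Fs 0" "cs 1 \<subseteq> Fs 1"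
    using cs_i[rule_format, of 0] cs_i[rule_format, of 1] by simp_all
  have cs_iso: "\<phi> ` cs 0 = cs 1" if "strict_mono_on (Fs 0) \<phi>" "bij_betw \<phi> (Fs 0) (Fs 1)" for \<phi>
    using cs_i[rule_format, of 1] that by simp
  have "cs 0 \<in> C" "cs 1 \<in> C" using bij_betw_apply[OF cs] by simp_all
  then obtain \<alpha> \<beta> where C: "{\<alpha>} \<in> C" "{\<beta>} \<in> C" and "cs 0 = {\<alpha>}" "cs 1 = {\<beta>}"
    using singletons by metis
  then have \<alpha>: "\<alpha> \<in> Fs 0" "\<alpha> \<notin> R" and \<beta>: "\<beta> \<in> Fs 1" "\<beta> \<notin> R" using cs_sub by auto
  have L: "Fs 0 \<in> level F (l - 1)" "Fs 1 \<in> level F (l - 1)"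
    and "Fs 0 \<union> Fs 1 \<subseteq> A" "Fs 0 \<inter> Fs 1 = R" "set_less (Fs 0 - R) (Fs 1 - R)"
    using d \<open>2 \<le> n l\<close> unfolding decomp_def by auto
  then have "\<alpha> < \<beta>" "\<alpha> \<notin> Fs 1" "\<beta> \<notin> Fs 0"
    using \<alpha> \<beta> unfolding set_less_def by auto
  obtain \<phi> where \<phi>: "strict_mono_on (Fs 0) \<phi>" "bij_betw \<phi> (Fs 0) (Fs 1)"
    using finite_order_iso level_finite[OF L(1)] level_finite[OF L(2)] level_card[OF L(1)]
      level_card[OF L(2)] by metis
  then have "\<phi> \<alpha> = \<beta>"
    using cs_iso \<open>cs 0 = {\<alpha>}\<close> \<open>cs 1 = {\<beta>}\<close> by simp
  then have "card {z\<in>Fs 0. z < \<alpha>} = card {z\<in>Fs 1. z < \<beta>}"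
    using card_less_strict_mono_bij[OF \<phi> \<alpha>(1)] by simp
  moreover have "A \<in> level F (Suc (l - 1))" using l by simp
  ultimately have "twin_at (l - 1) \<alpha> \<beta>"
    unfolding twin_at_def using L \<alpha>(1) \<beta>(1) \<open>\<alpha> < \<beta>\<close> \<open>\<alpha> \<notin> Fs 1\<close> \<open>\<beta> \<notin> Fs 0\<close>
      \<open>Fs 0 \<union> Fs 1 \<subseteq> A\<close> by blast
  with C show thesis by (rule that)
qed

lemma uncountable_has_twins:
  assumes capturing: "n_capturing 2 F n r" and "\<not> countable Y"
  obtains \<alpha> \<beta> j where "\<alpha> \<in> Y" "\<beta> \<in> Y" "twin_at j \<alpha> \<beta>"
proof -
  let ?S = "(\<lambda>y. {y}) ` Y"
  have "\<not> countable ?S"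
    using \<open>\<not> countable Y\<close> countable_image_inj_on[of "\<lambda>y. {y}" Y] by auto
  moreover have "\<forall>s\<in>?S. finite s" by simp
  ultimately have "\<exists>C l A. C \<subseteq> ?S \<and> finite C \<and> card C = 2 \<and> l > 0 \<and> A \<in> level F l \<and>
      captures F n r l A C"
    using capturing[unfolded n_capturing_def, rule_format, of ?S 0] by blast
  then obtain C l A where "C \<subseteq> ?S" "card C = 2" "captures F n r l A C" by blast
  moreover from \<open>C \<subseteq> ?S\<close> have "\<forall>c\<in>C. \<exists>y. c = {y}" by blast
  ultimately obtain \<alpha> \<beta> where "{\<alpha>} \<in> C" "{\<beta>} \<in> C" "twin_at (l - 1) \<alpha> \<beta>"
    using captured_singletons_twin by metis
  moreover have "\<alpha> \<in> Y" "\<beta> \<in> Y"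
    using \<open>C \<subseteq> ?S\<close> \<open>{\<alpha>} \<in> C\<close> \<open>{\<beta>} \<in> C\<close> by auto
  ultimately show thesis using that by blast
qed

definition twin_colour :: "'a set \<Rightarrow> nat" where
  "twin_colour s = (if \<exists>\<alpha> \<beta> j. s = {\<alpha>, \<beta>} \<and> twin_at j \<alpha> \<beta> then 1 else 0)"

lemma twin_colour_less_2: "twin_colour s < 2"
  by (simp add: twin_colour_def)

lemma twin_colour_eq_1_iff:
  assumes "p < q"
  shows "twin_colour {p, q} = 1 \<longleftrightarrow> (\<exists>j. twin_at j p q)"
proof -
  have "p = \<alpha> \<and> q = \<beta>" if "{p, q} = {\<alpha>, \<beta>}" "twin_at j \<alpha> \<beta>" for \<alpha> \<beta> j
    using that assms unfolding twin_at_def by (auto simp: doubleton_eq_iff)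
  then show ?thesis unfolding twin_colour_def by auto
qed

lemma no_uncountable_0_monochromatic:
  assumes "n_capturing 2 F n r" "\<not> countable Y"
  shows "\<not> monochromatic twin_colour 0 Y"
proof
  assume mono: "monochromatic twin_colour 0 Y"
  obtain \<alpha> \<beta> j where "\<alpha> \<in> Y" "\<beta> \<in> Y" "twin_at j \<alpha> \<beta>"
    using uncountable_has_twins[OF assms] .
  moreover have "\<alpha> < \<beta>" using \<open>twin_at j \<alpha> \<beta>\<close> unfolding twin_at_def by simp
  ultimately show False
    using mono twin_colour_eq_1_iff[of \<alpha> \<beta>] unfolding monochromatic_def by fastforce
qed

lemma no_omega_plus_two_1_monochromatic:
  assumes "otype_omega_plus_two Y"
  shows "\<not> monochromatic twin_colour 1 Y"
proof
  assume mono: "monochromatic twin_colour 1 Y"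
  obtain f :: "nat \<Rightarrow> 'a" and a b where f: "strict_mono f" "\<And>k. f k < a" "a < b"
    and Y: "Y = range f \<union> {a, b}"
    using assms unfolding otype_omega_plus_two_def by blast
  have twin: "\<exists>j. twin_at j p q" if "p \<in> Y" "q \<in> Y" "p < q" for p q
    using mono that twin_colour_eq_1_iff[of p q] unfolding monochromatic_def by auto
  obtain j0 where "twin_at j0 a b" using twin f(3) Y by blast
  then obtain A0 where A0: "A0 \<in> level F (Suc j0)" "a \<in> A0" "b \<in> A0"
    by (rule twin_atE) blast
  have "infinite (range f)"
    using f(1) by (simp add: strict_mono_imp_inj_on finite_image_iff)
  then obtain i where "f i \<notin> A0"
    using level_finite[OF A0(1)] by (metis finite_subset image_subsetI)
  have "f i \<in> Y" "a \<in> Y" "b \<in> Y" "f i < b"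
    using Y f(2,3) less_trans by auto
  then obtain j1 j2 where "twin_at j1 (f i) a" "twin_at j2 (f i) b"
    using twin f(2) by blast
  with \<open>f i \<notin> A0\<close> show False
    using outside_point_not_twin_of_two[OF A0 f(3)] by blast
qed

end

theorem mainTheorem10:
  assumes "omega1_type TYPE('a::wellorder)"
    and "CA TYPE('a) 2"
  shows "\<exists>c :: 'a set \<Rightarrow> nat.
           (\<forall>\<alpha> \<beta>. \<alpha> \<noteq> \<beta> \<longrightarrow> c {\<alpha>, \<beta>} < 2) \<and>
           \<not> (\<exists>Y. \<not> countable Y \<and> monochromatic c 0 Y) \<and>
           \<not> (\<exists>Y. otype_omega_plus_two Y \<and> monochromatic c 1 Y)"
proof -
  obtain F :: "'a set set" where
    F: "construction_scheme UNIV F binary_m (\<lambda>_. 2) binary_r" "n_capturing 2 F (\<lambda>_. 2) binary_r"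
    using assms(2) is_type_binary unfolding CA_def by blast
  interpret scheme UNIV F binary_m "\<lambda>_. 2" binary_r
    using F(1) by unfold_locales
  show ?thesis
    using twin_colour_less_2 no_uncountable_0_monochromatic[OF F(2)]
      no_omega_plus_two_1_monochromatic by blast
qed

end
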